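(* Let $X\subseteq V_\Delta$ be finite such that $G_X$ is connected and $X$ has no holes. Then for all $u,v\in X$, $$2\cdot \mathrm{dist}(u,v)=\mathrm{dist}_x(u,v)+\mathrm{dist}_y(u,v)+\mathrm{dist}_z(u,v).$$
   Context: $G_\Delta=(V_\Delta,E_\Delta)$ is the infinite regular triangular grid graph; its edges are parallel to one of three axes $x,y,z$. For finite $X\subseteq V_\Delta$, $G_X$ is the subgraph of $G_\Delta$ induced by $X$; $X$ has no holes if the subgraph of $G_\Delta$ induced by $V_\Delta\setminus X$ is connected. For an axis $d\in\{x,y,z\}$, let $E_d$ be the set of edges of $G_X$ parallel to $d$; the $d$-portals are the vertex sets of the connected components of $(X,E_d)$, and $\mathrm{portal}_d(u)$ is the $d$-portal containing $u$. Two $d$-portals are adjacent if some edge of $G_X$ joins a node of one to a node of the other. The $d$-portal graph $\mathcal P_d$ has the $d$-portals as vertices, adjacent portals being joined by an edge. $\mathrm{dist}(u,v)$ is the distance between $u$ and $v$ in $G_X$, and $\mathrm{dist}_d(u,v)$ is the distance between $\mathrm{portal}_d(u)$ and $\mathrm{portal}_d(v)$ in $\mathcal P_d$. *)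

theory Defs
  imports Main
begin

text \<open>The triangular grid: vertices are integer points in axial coordinates
(i,j); the three axes correspond to the directions (1,0), (0,1), (1,-1).
Each vertex has exactly six neighbours.\<close>

datatype axis = AxX | AxY | AxZ

type_synonym vtx = "int \<times> int"

fun dirvec :: "axis \<Rightarrow> vtx" where
  "dirvec AxX = (1, 0)"
| "dirvec AxY = (0, 1)"
| "dirvec AxZ = (1, -1)"

definition shift :: "vtx \<Rightarrow> vtx \<Rightarrow> vtx" where
  "shift p v = (fst p + fst v, snd p + snd v)"

definition adj_dir :: "axis \<Rightarrow> vtx \<Rightarrow> vtx \<Rightarrow> bool" where
  "adj_dir d p q \<longleftrightarrow> q = shift p (dirvec d) \<or> p = shift q (dirvec d)"

definition tri_adj :: "vtx \<Rightarrow> vtx \<Rightarrow> bool" where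
  "tri_adj p q \<longleftrightarrow> (\<exists>d. adj_dir d p q)"

definition edges :: "vtx set \<Rightarrow> (vtx \<times> vtx) set" where
  "edges X = {(p, q). p \<in> X \<and> q \<in> X \<and> tri_adj p q}"

definition edges_dir :: "axis \<Rightarrow> vtx set \<Rightarrow> (vtx \<times> vtx) set" where
  "edges_dir d X = {(p, q). p \<in> X \<and> q \<in> X \<and> adj_dir d p q}"

definition induced_connected :: "vtx set \<Rightarrow> bool" where
  "induced_connected X \<longleftrightarrow> (\<forall>p\<in>X. \<forall>q\<in>X. (p, q) \<in> (edges X)\<^sup>*)"

definition no_holes :: "vtx set \<Rightarrow> bool" where
  "no_holes X \<longleftrightarrow> induced_connected (- X)"

definition gdist :: "('a \<times> 'a) set \<Rightarrow> 'a \<Rightarrow> 'a \<Rightarrow> nat" where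
  "gdist E a b = (LEAST n. (a, b) \<in> E ^^ n)"

definition dist :: "vtx set \<Rightarrow> vtx \<Rightarrow> vtx \<Rightarrow> nat" where
  "dist X u v = gdist (edges X) u v"

definition portal :: "axis \<Rightarrow> vtx set \<Rightarrow> vtx \<Rightarrow> vtx set" where
  "portal d X u = {v. (u, v) \<in> (edges_dir d X)\<^sup>*}"

definition portals :: "axis \<Rightarrow> vtx set \<Rightarrow> vtx set set" where
  "portals d X = portal d X ` X"

definition portal_edges :: "axis \<Rightarrow> vtx set \<Rightarrow> (vtx set \<times> vtx set) set" where
  "portal_edges d X = {(P, Q). P \<in> portals d X \<and> Q \<in> portals d X \<and> P \<noteq> Q \<and>
      (\<exists>p\<in>P. \<exists>q\<in>Q. (p, q) \<in> edges X)}"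

definition dist_dir :: "axis \<Rightarrow> vtx set \<Rightarrow> vtx \<Rightarrow> vtx \<Rightarrow> nat" where
  "dist_dir d X u v = gdist (portal_edges d X) (portal d X u) (portal d X v)"

end

theory Submission
  imports Defs
begin

text \<open>Fix a shortest walk from u to v in \<open>G\<^sub>X\<close>. Each of its edges is parallel to exactly one
  axis, so it changes the portal for exactly two of the three axes, and the numbers of portal
  changes along the walk add up to \<open>2 \<cdot> dist(u, v)\<close>. It remains to show that, for each axis d,
  the walk changes its d-portal exactly \<open>dist\<^sub>d(u, v)\<close> times. Since X has no holes, every edge
  of the portal graph is a bridge: a cycle of \<open>G\<^sub>X\<close> through the edge would separate the two
  cells beyond the ends of the "window" between the two portals, although these cells lie
  outside X and hence are joined outside X (made precise by a ray-crossing parity count).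
  A shortest walk never crosses a portal edge twice, since crossing back would allow a
  shortcut inside a portal. So the portals visited form a path through distinct bridges, and
  every walk in the portal graph between its ends must use all of them.\<close>

lemma finite_int_run:
  fixes S :: "int set"
  assumes "finite S" and "a \<in> S"
  obtains l u where "l \<le> a" "a \<le> u" "{l..u} \<subseteq> S" "l - 1 \<notin> S" "u + 1 \<notin> S"
proof -
  define L where "L = {f. f \<le> a \<and> {f..a} \<subseteq> S}"
  define U where "U = {f. a \<le> f \<and> {a..f} \<subseteq> S}"
  have "L \<subseteq> S" "U \<subseteq> S" unfolding L_def U_def by auto
  then have fin: "finite L" "finite U" using assms(1) finite_subset by auto
  have "a \<in> L" "a \<in> U" using assms(2) by (auto simp: L_def U_def)
  then have l: "Min L \<le> a" "{Min L..a} \<subseteq> S" and u: "a \<le> Max U" "{a..Max U} \<subseteq> S"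
    using fin Min_in Max_in unfolding L_def U_def by blast+
  have "Min L - 1 \<notin> S"
  proof
    assume "Min L - 1 \<in> S"
    moreover have "{Min L - 1..a} = insert (Min L - 1) {Min L..a}" using l by auto
    ultimately have "Min L - 1 \<in> L" using l unfolding L_def by auto
    then show False using Min_le[OF fin(1)] by fastforce
  qed
  moreover have "Max U + 1 \<notin> S"
  proof
    assume "Max U + 1 \<in> S"
    moreover have "{a..Max U + 1} = insert (Max U + 1) {a..Max U}" using u by auto
    ultimately have "Max U + 1 \<in> U" using u unfolding U_def by auto
    then show False using Max_ge[OF fin(2)] by fastforce
  qed
  moreover have "{Min L..Max U} \<subseteq> {Min L..a} \<union> {a..Max U}" by auto
  ultimately show thesis using l u by (intro that) auto
qed

lemma card_less_Suc_filter:
  "card {k. k < Suc m \<and> P k} = card {k. k < m \<and> P k} + of_bool (P m)"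
proof -
  have "{k. k < Suc m \<and> P k} = (if P m then insert m {k. k < m \<and> P k} else {k. k < m \<and> P k})"
    by (auto simp: less_Suc_eq)
  then show ?thesis by simp
qed

lemma odd_card_boundary_steps_iff:
  "odd (card {k. k < m \<and> (G k \<in> A) \<noteq> (G (Suc k) \<in> A)}) \<longleftrightarrow> (G 0 \<in> A) \<noteq> (G m \<in> A)"
  by (induction m) (auto simp: card_less_Suc_filter)

lemma rtrancl_chain:
  assumes "\<And>j. a \<le> j \<Longrightarrow> j < b \<Longrightarrow> h j = h (Suc j) \<or> (h j, h (Suc j)) \<in> R" and "a \<le> b"
  shows "(h a, h b) \<in> R\<^sup>*"
  using assms
proof (induction b)
  case (Suc b)
  show ?case
  proof (cases "a = Suc b")
    case False
    then have "(h a, h b) \<in> R\<^sup>*" using Suc by simp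
    moreover have "h b = h (Suc b) \<or> (h b, h (Suc b)) \<in> R" using Suc.prems False by simp
    ultimately show ?thesis by (metis rtrancl.rtrancl_into_rtrancl)
  qed simp
qed simp

lemma relpow_subwalk:
  assumes "\<And>k. k < n \<Longrightarrow> (f k, f (Suc k)) \<in> R" and "a \<le> b" and "b \<le> n"
  shows "(f a, f b) \<in> R ^^ (b - a)"
  using assms(2,3)
proof (induction b)
  case (Suc b)
  show ?case
  proof (cases "a = Suc b")
    case False
    then have "(f a, f (Suc b)) \<in> R ^^ Suc (b - a)"
      using Suc assms(1) by (auto intro: relpow_Suc_I)
    then show ?thesis using False Suc.prems by (simp add: Suc_diff_le)
  qed simp
qed simp

lemma gdist_le: "(a, b) \<in> R ^^ m \<Longrightarrow> gdist R a b \<le> m"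
  unfolding gdist_def by (rule Least_le)

lemma relpow_gdist: "(a, b) \<in> R\<^sup>* \<Longrightarrow> (a, b) \<in> R ^^ gdist R a b"
  unfolding gdist_def by (rule LeastI_ex) (use rtrancl_imp_relpow in blast)

definition remove_edge :: "('a \<times> 'a) set \<Rightarrow> 'a \<Rightarrow> 'a \<Rightarrow> ('a \<times> 'a) set" where
  "remove_edge R a b = R - {(a, b), (b, a)}"

lemma sym_remove_edge: "sym R \<Longrightarrow> sym (remove_edge R a b)"
  unfolding remove_edge_def sym_def by blast

section \<open>Coordinates along an axis\<close>

text \<open>Coordinates in which the edges parallel to d are horizontal: \<open>lane d p\<close> numbers the
  line parallel to d through p, and \<open>along d p\<close> is the position of p on that line.\<close>
definition align :: "axis \<Rightarrow> vtx \<Rightarrow> vtx" where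
  "align d p = (case d of AxX \<Rightarrow> p | AxY \<Rightarrow> (snd p, fst p) | AxZ \<Rightarrow> (- snd p, fst p + snd p))"

definition unalign :: "axis \<Rightarrow> vtx \<Rightarrow> vtx" where
  "unalign d w = (case d of AxX \<Rightarrow> w | AxY \<Rightarrow> (snd w, fst w) | AxZ \<Rightarrow> (snd w + fst w, - fst w))"

abbreviation along :: "axis \<Rightarrow> vtx \<Rightarrow> int" where
  "along d p \<equiv> fst (align d p)"

abbreviation lane :: "axis \<Rightarrow> vtx \<Rightarrow> int" where
  "lane d p \<equiv> snd (align d p)"

lemma align_unalign [simp]: "align d (unalign d w) = w"
  by (cases d) (auto simp: align_def unalign_def)

lemma unalign_align [simp]: "unalign d (align d p) = p"
  by (cases d) (auto simp: align_def unalign_def)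

lemma unalign_along_lane [simp]: "unalign d (along d p, lane d p) = p"
  by simp

lemma tri_adj_iff_adj_dir: "tri_adj p q \<longleftrightarrow> adj_dir AxX p q \<or> adj_dir AxY p q \<or> adj_dir AxZ p q"
  unfolding tri_adj_def by (metis axis.exhaust)

lemma tri_adj_iff:
  "tri_adj p q \<longleftrightarrow>
     (snd q = snd p \<and> (fst q = fst p + 1 \<or> fst q = fst p - 1)) \<or>
     (snd q = snd p + 1 \<and> (fst q = fst p \<or> fst q = fst p - 1)) \<or>
     (snd q = snd p - 1 \<and> (fst q = fst p \<or> fst q = fst p + 1))"
  unfolding tri_adj_iff_adj_dir adj_dir_def shift_def
  by (cases p; cases q) (simp; presburger)

lemma tri_adj_sym: "tri_adj p q \<Longrightarrow> tri_adj q p"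
  unfolding tri_adj_iff by auto

lemma tri_adj_align [simp]: "tri_adj (align d p) (align d q) \<longleftrightarrow> tri_adj p q"
  unfolding tri_adj_iff align_def by (cases d) auto

lemma adj_dir_iff_lane:
  "adj_dir d p q \<longleftrightarrow> lane d q = lane d p \<and> (along d q = along d p + 1 \<or> along d q = along d p - 1)"
  unfolding adj_dir_def shift_def align_def by (cases d) (auto simp: prod_eq_iff)

lemma adj_dir_imp_tri_adj: "adj_dir d p q \<Longrightarrow> tri_adj p q"
  unfolding tri_adj_def by auto

lemma adj_dir_unique: "adj_dir d p q \<Longrightarrow> adj_dir d' p q \<Longrightarrow> d = d'"
  unfolding adj_dir_def shift_def by (cases d; cases d') (auto simp: prod_eq_iff)

lemma tri_adj_along_le: "tri_adj p q \<Longrightarrow> \<bar>along d q - along d p\<bar> \<le> 1"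
  using tri_adj_align[of d p q] unfolding tri_adj_iff by auto

lemma crossing_step_cases:
  assumes "tri_adj p q" and "\<not> adj_dir d p q"
  shows "(lane d q = lane d p + 1 \<and> (along d q = along d p \<or> along d q = along d p - 1)) \<or>
         (lane d q = lane d p - 1 \<and> (along d q = along d p \<or> along d q = along d p + 1))"
  using tri_adj_align[of d p q] assms unfolding tri_adj_iff adj_dir_iff_lane by auto

lemma cross_and_return_along:
  assumes "tri_adj p q" and "\<not> adj_dir d p q" and "tri_adj p' q'" and "\<not> adj_dir d p' q'"
    and "lane d p' = lane d q" and "lane d q' = lane d p"
  shows "\<bar>(along d q' - along d p') + (along d q - along d p)\<bar> \<le> 1"
  using crossing_step_cases[OF assms(1,2)] crossing_step_cases[OF assms(3,4)] assms(5,6)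
  by presburger

lemma sym_edges: "sym (edges X)"
  unfolding edges_def by (auto intro: symI tri_adj_sym)

lemma sym_edges_dir: "sym (edges_dir d X)"
  unfolding edges_dir_def adj_dir_def by (auto intro: symI)

lemma edges_dir_subset_edges: "edges_dir d X \<subseteq> edges X"
  unfolding edges_dir_def edges_def using adj_dir_imp_tri_adj by auto

lemma edges_dir_iff_lane:
  "(x, y) \<in> edges_dir d X \<longleftrightarrow>
     x \<in> X \<and> y \<in> X \<and> lane d y = lane d x \<and> (along d y = along d x + 1 \<or> along d y = along d x - 1)"
  unfolding edges_dir_def adj_dir_iff_lane by auto

section \<open>Portals\<close>

lemma portal_self: "p \<in> portal d X p"
  unfolding portal_def by simp

lemma portal_eq_if_mem:
  assumes "w \<in> portal d X p"
  shows "portal d X w = portal d X p"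
proof -
  have "(p, w) \<in> (edges_dir d X)\<^sup>*" using assms unfolding portal_def by simp
  moreover have "(w, p) \<in> (edges_dir d X)\<^sup>*"
    using calculation symD[OF sym_rtrancl[OF sym_edges_dir]] by blast
  ultimately show ?thesis unfolding portal_def by (auto intro: rtrancl_trans)
qed

lemma portal_eq_iff_mem: "portal d X w = portal d X p \<longleftrightarrow> w \<in> portal d X p"
  using portal_eq_if_mem portal_self by metis

lemma portal_lane: "w \<in> portal d X p \<Longrightarrow> lane d w = lane d p"
  unfolding portal_def mem_Collect_eq
  by (induction rule: rtrancl_induct) (auto simp: edges_dir_iff_lane)

lemma portal_eq_iff_adj_dir:
  assumes "(x, y) \<in> edges X"
  shows "portal d X x = portal d X y \<longleftrightarrow> adj_dir d x y"
proof
  have x: "x \<in> X" and y: "y \<in> X" and xy: "tri_adj x y" using assms unfolding edges_def by auto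
  show "adj_dir d x y" if "portal d X x = portal d X y"
  proof -
    have "lane d y = lane d x" using that portal_lane portal_self by metis
    then show ?thesis using crossing_step_cases[OF xy, of d] by auto
  qed
  show "portal d X x = portal d X y" if "adj_dir d x y"
  proof -
    have "(x, y) \<in> edges_dir d X" unfolding edges_dir_def using that x y by auto
    then have "y \<in> portal d X x" unfolding portal_def by auto
    then show ?thesis by (metis portal_eq_if_mem)
  qed
qed

lemma two_portals_change:
  assumes "(x, y) \<in> edges X"
  shows "of_bool (portal AxX X x \<noteq> portal AxX X y) + of_bool (portal AxY X x \<noteq> portal AxY X y)
       + of_bool (portal AxZ X x \<noteq> portal AxZ X y) = (2 :: nat)"
proof -
  obtain d0 where d0: "adj_dir d0 x y" using assms unfolding edges_def tri_adj_def by blast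
  have "portal d X x = portal d X y \<longleftrightarrow> d = d0" for d
    using portal_eq_iff_adj_dir[OF assms] adj_dir_unique d0 by blast
  then show ?thesis by (cases d0) auto
qed

lemma lane_walk:
  assumes "\<bar>s\<bar> = 1" and "\<forall>i\<le>k. unalign d (a + s * int i, l) \<in> X"
  shows "(unalign d (a, l), unalign d (a + s * int k, l)) \<in> edges_dir d X ^^ k"
  using assms(2)
proof (induction k)
  case 0
  then show ?case by simp
next
  case (Suc k)
  have "(unalign d (a + s * int k, l), unalign d (a + s * int (Suc k), l)) \<in> edges_dir d X"
    unfolding edges_dir_iff_lane using Suc.prems assms(1) by (auto simp: algebra_simps abs_if) arith
  then show ?case using Suc by (auto intro: relpow_Suc_I)
qed

lemma portal_imp_segment:
  assumes "p \<in> X" and "w \<in> portal d X p"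
  shows "lane d w = lane d p \<and>
    (\<forall>f\<in>{min (along d p) (along d w)..max (along d p) (along d w)}. unalign d (f, lane d p) \<in> X)"
proof -
  have "(p, w) \<in> (edges_dir d X)\<^sup>*" using assms(2) unfolding portal_def by simp
  then show ?thesis
  proof (induction rule: rtrancl_induct)
    case base
    then show ?case using assms(1) by simp
  next
    case (step y z)
    have z: "z \<in> X" "lane d z = lane d y" "\<bar>along d z - along d y\<bar> = 1"
      using step.hyps(2) unfolding edges_dir_iff_lane by auto
    show ?case
    proof (intro conjI ballI)
      show "lane d z = lane d p" using z step.IH by simp
    next
      fix f assume f: "f \<in> {min (along d p) (along d z)..max (along d p) (along d z)}"
      show "unalign d (f, lane d p) \<in> X"
      proof (cases "f = along d z")
        case True
        then show ?thesis using z step.IH by (metis unalign_along_lane)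
      next
        case False
        then have "f \<in> {min (along d p) (along d y)..max (along d p) (along d y)}"
          using f z(3) by auto
        then show ?thesis using step.IH by blast
      qed
    qed
  qed
qed

lemma segment_imp_relpow:
  assumes "lane d w = lane d p"
    and "\<forall>f\<in>{min (along d p) (along d w)..max (along d p) (along d w)}. unalign d (f, lane d p) \<in> X"
  shows "(p, w) \<in> edges_dir d X ^^ nat \<bar>along d w - along d p\<bar>"
proof -
  define s where "s = (if along d p \<le> along d w then 1 else -1 :: int)"
  define k where "k = nat \<bar>along d w - along d p\<bar>"
  have "\<forall>i\<le>k. unalign d (along d p + s * int i, lane d p) \<in> X"
    using assms(2) unfolding s_def k_def by auto
  from lane_walk[OF _ this]
  have "(p, unalign d (along d p + s * int k, lane d p)) \<in> edges_dir d X ^^ k"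
    unfolding s_def by simp
  moreover have "along d p + s * int k = along d w" unfolding s_def k_def by auto
  ultimately show ?thesis using assms(1) unfolding k_def by (metis unalign_along_lane)
qed

lemma portal_iff_segment:
  assumes "p \<in> X"
  shows "w \<in> portal d X p \<longleftrightarrow> lane d w = lane d p \<and>
    (\<forall>f\<in>{min (along d p) (along d w)..max (along d p) (along d w)}. unalign d (f, lane d p) \<in> X)"
proof
  show "w \<in> portal d X p" if "lane d w = lane d p \<and>
    (\<forall>f\<in>{min (along d p) (along d w)..max (along d p) (along d w)}. unalign d (f, lane d p) \<in> X)"
    using relpow_imp_rtrancl[OF segment_imp_relpow] that unfolding portal_def by auto
qed (rule portal_imp_segment[OF assms])

lemma portal_relpow_edges:
  assumes "p \<in> X" and "w \<in> portal d X p"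
  shows "(p, w) \<in> edges X ^^ nat \<bar>along d w - along d p\<bar>"
proof -
  have "(p, w) \<in> edges_dir d X ^^ nat \<bar>along d w - along d p\<bar>"
    using portal_imp_segment[OF assms] by (intro segment_imp_relpow) auto
  then show ?thesis
    by (rule relpowp_mono[to_set, rotated]) (use edges_dir_subset_edges in blast)
qed

definition maximal_run :: "axis \<Rightarrow> vtx set \<Rightarrow> vtx \<Rightarrow> int \<Rightarrow> int \<Rightarrow> bool" where
  "maximal_run d X p l u \<longleftrightarrow> along d p \<in> {l..u} \<and> (\<forall>f\<in>{l..u}. unalign d (f, lane d p) \<in> X) \<and>
     unalign d (l - 1, lane d p) \<notin> X \<and> unalign d (u + 1, lane d p) \<notin> X"

lemma maximal_run_exists:
  assumes "finite X" and "p \<in> X"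
  obtains l u where "maximal_run d X p l u"
proof -
  have "inj (\<lambda>f. unalign d (f, lane d p))" by (rule injI) (metis align_unalign prod.inject)
  then have "finite ((\<lambda>f. unalign d (f, lane d p)) -` X)"
    using assms(1) by (rule finite_vimageI[rotated])
  moreover have "along d p \<in> (\<lambda>f. unalign d (f, lane d p)) -` X" using assms(2) by simp
  ultimately obtain l u where "l \<le> along d p" "along d p \<le> u"
    "{l..u} \<subseteq> (\<lambda>f. unalign d (f, lane d p)) -` X"
    "l - 1 \<notin> (\<lambda>f. unalign d (f, lane d p)) -` X" "u + 1 \<notin> (\<lambda>f. unalign d (f, lane d p)) -` X"
    by (rule finite_int_run)
  then show thesis by (intro that) (auto simp: maximal_run_def)
qed

lemma portal_iff_within_run:
  assumes run: "maximal_run d X p l u" and lane: "lane d w = lane d p"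
  shows "w \<in> portal d X p \<longleftrightarrow> along d w \<in> {l..u}"
proof
  have p: "p \<in> X" using run unfolding maximal_run_def by (metis unalign_along_lane)
  show "along d w \<in> {l..u}" if "w \<in> portal d X p"
  proof -
    have "l - 1 \<notin> {min (along d p) (along d w)..max (along d p) (along d w)}"
      "u + 1 \<notin> {min (along d p) (along d w)..max (along d p) (along d w)}"
      using that run unfolding portal_iff_segment[OF p] maximal_run_def by blast+
    then show ?thesis
      using run unfolding maximal_run_def by (auto simp: min_def max_def split: if_splits)
  qed
  show "w \<in> portal d X p" if "along d w \<in> {l..u}"
  proof -
    have "{min (along d p) (along d w)..max (along d p) (along d w)} \<subseteq> {l..u}"
      using that run unfolding maximal_run_def by auto
    then show ?thesis using lane run unfolding portal_iff_segment[OF p] maximal_run_def by blast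
  qed
qed

lemma sym_portal_edges: "sym (portal_edges d X)"
  using sym_edges unfolding portal_edges_def sym_def by blast

lemma portal_eq_of_mem_portals:
  assumes "B \<in> portals d X" and "x \<in> B"
  shows "portal d X x = B"
  using assms portal_eq_if_mem unfolding portals_def by blast

section \<open>Ray-crossing parity\<close>

definition closed_walk :: "(nat \<Rightarrow> vtx) \<Rightarrow> nat \<Rightarrow> bool" where
  "closed_walk G m \<longleftrightarrow> G 0 = G m \<and> (\<forall>k<m. tri_adj (G k) (G (Suc k)))"

definition joins_rows :: "int \<Rightarrow> vtx \<Rightarrow> vtx \<Rightarrow> bool" where
  "joins_rows b x y \<longleftrightarrow> (snd x = b \<and> snd y = b + 1) \<or> (snd x = b + 1 \<and> snd y = b)"

text \<open>A step joining rows b and b+1 is \<open>(i, b)\<close>--\<open>(i, b+1)\<close> or \<open>(i, b)\<close>--\<open>(i-1, b+1)\<close>, so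
  the sum of the first coordinates of its ends orders such steps from left to right:
  \<open>strip_crossings G m b t\<close> counts the crossings of the walk with a horizontal half-line
  inside that strip, and \<open>ray_crossings G m z\<close> is the ray-casting count whose parity tells
  whether G winds around z.\<close>
definition strip_crossings :: "(nat \<Rightarrow> vtx) \<Rightarrow> nat \<Rightarrow> int \<Rightarrow> int \<Rightarrow> nat" where
  "strip_crossings G m b t =
     card {k. k < m \<and> joins_rows b (G k) (G (Suc k)) \<and> t < fst (G k) + fst (G (Suc k))}"

definition ray_crossings :: "(nat \<Rightarrow> vtx) \<Rightarrow> nat \<Rightarrow> vtx \<Rightarrow> nat" where
  "ray_crossings G m z = strip_crossings G m (snd z) (2 * fst z)"

lemma strip_crossings_split:
  assumes "t \<le> t'"
  shows "strip_crossings G m b t = strip_crossings G m b t' +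
    card {k. k < m \<and> joins_rows b (G k) (G (Suc k)) \<and>
             t < fst (G k) + fst (G (Suc k)) \<and> fst (G k) + fst (G (Suc k)) \<le> t'}"
    (is "_ = _ + card ?B")
proof -
  let ?A = "{k. k < m \<and> joins_rows b (G k) (G (Suc k)) \<and> t' < fst (G k) + fst (G (Suc k))}"
  have "{k. k < m \<and> joins_rows b (G k) (G (Suc k)) \<and> t < fst (G k) + fst (G (Suc k))} = ?A \<union> ?B"
    using assms by auto
  moreover have "?A \<inter> ?B = {}" by auto
  ultimately show ?thesis unfolding strip_crossings_def by (simp add: card_Un_disjoint)
qed

lemma strip_crossings_eq:
  assumes "t \<le> t'"
    and "\<And>k. k < m \<Longrightarrow> joins_rows b (G k) (G (Suc k)) \<Longrightarrow> t < fst (G k) + fst (G (Suc k)) \<Longrightarrow>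
           fst (G k) + fst (G (Suc k)) \<le> t' \<Longrightarrow> False"
  shows "strip_crossings G m b t = strip_crossings G m b t'"
proof -
  have "{k. k < m \<and> joins_rows b (G k) (G (Suc k)) \<and>
          t < fst (G k) + fst (G (Suc k)) \<and> fst (G k) + fst (G (Suc k)) \<le> t'} = {}"
    using assms(2) by blast
  then show ?thesis using strip_crossings_split[OF assms(1), of G m b] by simp
qed

lemma step_leaves_ray_iff:
  assumes "tri_adj x y" and "x \<noteq> z" and "y \<noteq> z"
  shows "((snd x = snd z \<and> fst x > fst z) \<noteq> (snd y = snd z \<and> fst y > fst z)) \<longleftrightarrow>
    (joins_rows (snd z) x y \<and> 2 * fst z < fst x + fst y) \<or>
    (joins_rows (snd z - 1) x y \<and> 2 * fst z + 1 < fst x + fst y)"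
proof -
  obtain i j where x: "x = (i, j)" by (cases x)
  obtain a c where z: "z = (a, c)" by (cases z)
  have "y = (i + 1, j) \<or> y = (i - 1, j) \<or> y = (i, j + 1) \<or> y = (i - 1, j + 1) \<or>
        y = (i, j - 1) \<or> y = (i + 1, j - 1)"
    using assms(1) unfolding x tri_adj_iff by (auto simp: prod_eq_iff)
  then show ?thesis using assms(2,3) unfolding x z joins_rows_def
    by (elim disjE) (simp_all; arith)+
qed

lemma even_ray_crossings_below:
  assumes "closed_walk G m" and "\<forall>k\<le>m. G k \<noteq> z"
  shows "even (ray_crossings G m z + strip_crossings G m (snd z - 1) (2 * fst z + 1))"
proof -
  let ?A = "{w. snd w = snd z \<and> fst w > fst z}"
  let ?S1 = "{k. k < m \<and> joins_rows (snd z) (G k) (G (Suc k)) \<and>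
                  2 * fst z < fst (G k) + fst (G (Suc k))}"
  let ?S2 = "{k. k < m \<and> joins_rows (snd z - 1) (G k) (G (Suc k)) \<and>
                  2 * fst z + 1 < fst (G k) + fst (G (Suc k))}"
  have "(G k \<in> ?A) \<noteq> (G (Suc k) \<in> ?A) \<longleftrightarrow> k \<in> ?S1 \<union> ?S2" if "k < m" for k
  proof -
    have "tri_adj (G k) (G (Suc k))" "G k \<noteq> z" "G (Suc k) \<noteq> z"
      using assms that unfolding closed_walk_def by auto
    from step_leaves_ray_iff[OF this] show ?thesis using that by simp
  qed
  then have "{k. k < m \<and> (G k \<in> ?A) \<noteq> (G (Suc k) \<in> ?A)} = ?S1 \<union> ?S2" by blast
  moreover have "?S1 \<inter> ?S2 = {}" unfolding joins_rows_def by auto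
  moreover have "even (card {k. k < m \<and> (G k \<in> ?A) \<noteq> (G (Suc k) \<in> ?A)})"
    using assms(1) odd_card_boundary_steps_iff[of m G ?A] unfolding closed_walk_def by simp
  ultimately show ?thesis
    unfolding ray_crossings_def strip_crossings_def by (simp add: card_Un_disjoint)
qed

lemma strip_crossings_eq_lower_cell:
  assumes "closed_walk G m" and "\<forall>k\<le>m. G k \<noteq> (i, b)"
    and "2 * i - 2 \<le> t" and "t \<le> t'" and "t' \<le> 2 * i"
  shows "strip_crossings G m b t = strip_crossings G m b t'"
proof (rule strip_crossings_eq[OF assms(4)])
  fix k assume k: "k < m" "joins_rows b (G k) (G (Suc k))"
    "t < fst (G k) + fst (G (Suc k))" "fst (G k) + fst (G (Suc k)) \<le> t'"
  have "tri_adj (G k) (G (Suc k))" "G k \<noteq> (i, b)" "G (Suc k) \<noteq> (i, b)"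
    using assms(1,2) k(1) unfolding closed_walk_def by auto
  then show False using k(2-4) assms(3,5) unfolding joins_rows_def
    by (cases "G k"; cases "G (Suc k)") (auto simp: tri_adj_iff)
qed

lemma strip_crossings_eq_upper_cell:
  assumes "closed_walk G m" and "\<forall>k\<le>m. G k \<noteq> (i, b + 1)"
    and "2 * i - 1 \<le> t" and "t \<le> t'" and "t' \<le> 2 * i + 1"
  shows "strip_crossings G m b t = strip_crossings G m b t'"
proof (rule strip_crossings_eq[OF assms(4)])
  fix k assume k: "k < m" "joins_rows b (G k) (G (Suc k))"
    "t < fst (G k) + fst (G (Suc k))" "fst (G k) + fst (G (Suc k)) \<le> t'"
  have "tri_adj (G k) (G (Suc k))" "G k \<noteq> (i, b + 1)" "G (Suc k) \<noteq> (i, b + 1)"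
    using assms(1,2) k(1) unfolding closed_walk_def by auto
  then show False using k(2-4) assms(3,5) unfolding joins_rows_def
    by (cases "G k"; cases "G (Suc k)") (auto simp: tri_adj_iff)
qed

lemma even_ray_crossings_neighbour:
  assumes walk: "closed_walk G m" and "\<forall>k\<le>m. G k \<noteq> z" and "\<forall>k\<le>m. G k \<noteq> z'"
    and "z' = (fst z + 1, snd z) \<or> z' = (fst z, snd z + 1) \<or> z' = (fst z + 1, snd z - 1)"
  shows "even (ray_crossings G m z + ray_crossings G m z')"
proof -
  obtain x b where z: "z = (x, b)" by (cases z)
  from assms(4) consider "z' = (x + 1, b)" | "z' = (x, b + 1)" | "z' = (x + 1, b - 1)"
    unfolding z by auto
  then show ?thesis
  proof cases
    case 1
    then have "strip_crossings G m b (2 * x) = strip_crossings G m b (2 * (x + 1))"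
      using strip_crossings_eq_lower_cell[OF walk, of "x + 1" b] assms(3) by simp
    then show ?thesis unfolding ray_crossings_def z 1 by simp
  next
    case 2
    then have "strip_crossings G m b (2 * x) = strip_crossings G m b (2 * x + 1)"
      using strip_crossings_eq_upper_cell[OF walk, of x b] assms(3) by simp
    then show ?thesis
      using even_ray_crossings_below[OF walk assms(3)] unfolding ray_crossings_def z 2 by simp
  next
    case 3
    then have "strip_crossings G m (b - 1) (2 * x + 1) = strip_crossings G m (b - 1) (2 * (x + 1))"
      using strip_crossings_eq_lower_cell[OF walk, of "x + 1" "b - 1"] assms(3) by simp
    then show ?thesis
      using even_ray_crossings_below[OF walk assms(2)] unfolding ray_crossings_def z 3 by simp
  qed
qed

lemma even_ray_crossings_adjacent:
  assumes "closed_walk G m" and "\<forall>k\<le>m. G k \<noteq> z" and "\<forall>k\<le>m. G k \<noteq> z'" and "tri_adj z z'"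
  shows "even (ray_crossings G m z + ray_crossings G m z')"
proof -
  have "(z' = (fst z + 1, snd z) \<or> z' = (fst z, snd z + 1) \<or> z' = (fst z + 1, snd z - 1)) \<or>
        (z = (fst z' + 1, snd z') \<or> z = (fst z', snd z' + 1) \<or> z = (fst z' + 1, snd z' - 1))"
    using assms(4) unfolding tri_adj_iff by (auto simp: prod_eq_iff)
  then show ?thesis
    using even_ray_crossings_neighbour[OF assms(1,2,3)]
      even_ray_crossings_neighbour[OF assms(1,3,2)]
    by (auto simp: add.commute)
qed

lemma even_ray_crossings_connected:
  assumes "closed_walk G m" and "\<forall>k\<le>m. G k \<notin> S" and "(z, z') \<in> (edges S)\<^sup>*"
  shows "even (ray_crossings G m z + ray_crossings G m z')"
  using assms(3)
proof (induction rule: rtrancl_induct)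
  case (step y w)
  then have "y \<in> S" "w \<in> S" "tri_adj y w" unfolding edges_def by auto
  then have "even (ray_crossings G m y + ray_crossings G m w)"
    using even_ray_crossings_adjacent[OF assms(1)] assms(2) by metis
  then show ?case using step.IH by presburger
qed simp

lemma even_ray_crossings_strip:
  assumes "closed_walk G m" and "\<forall>k\<le>m. G k \<noteq> z" and "snd z = b \<or> snd z = b + 1"
  shows "even (ray_crossings G m z +
    strip_crossings G m b (2 * fst z + (if snd z = b then 0 else 1)))"
  using assms(3) even_ray_crossings_below[OF assms(1,2)] unfolding ray_crossings_def by auto

lemma even_strip_crossings_between:
  assumes "even (strip_crossings G m b t + strip_crossings G m b t')"
  shows "even (card {k. k < m \<and> joins_rows b (G k) (G (Suc k)) \<and>
    t < fst (G k) + fst (G (Suc k)) \<and> fst (G k) + fst (G (Suc k)) \<le> t'})"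
proof (cases "t \<le> t'")
  case False
  then have "{k. k < m \<and> joins_rows b (G k) (G (Suc k)) \<and>
      t < fst (G k) + fst (G (Suc k)) \<and> fst (G k) + fst (G (Suc k)) \<le> t'} = {}" by auto
  then show ?thesis by (simp only: card.empty even_zero)
qed (use strip_crossings_split[of t t' G m b] assms in presburger)

section \<open>Portal edges are bridges\<close>

lemma rtrancl_edges_align:
  assumes "(a, b) \<in> (edges Y)\<^sup>*"
  shows "(align d a, align d b) \<in> (edges (unalign d -` Y))\<^sup>*"
  using assms
proof (induction rule: rtrancl_induct)
  case (step y z)
  then have "(align d y, align d z) \<in> edges (unalign d -` Y)" unfolding edges_def by auto
  with step.IH show ?case by (rule rtrancl_into_rtrancl)
qed simp

text \<open>The cells zL and zR just beyond the two ends of the window spanned by the maximal runs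
  through p and q lie outside X, so they are joined outside X and their ray-crossing parities
  for a closed walk in X agree. The two rays differ by the window, which the walk therefore
  crosses an even number of times.\<close>
lemma even_window_crossings:
  assumes "no_holes X" and p_run: "maximal_run d X p p1 p2" and q_run: "maximal_run d X q q1 q2"
    and up: "lane d q = lane d p + 1"
    and walk: "closed_walk G m" and in_X: "\<forall>k\<le>m. unalign d (G k) \<in> X"
  shows "even (card {k. k < m \<and> joins_rows (lane d p) (G k) (G (Suc k)) \<and>
    max (2 * p1 - 2) (2 * q1 - 1) < fst (G k) + fst (G (Suc k)) \<and>
    fst (G k) + fst (G (Suc k)) \<le> min (2 * p2 + 2) (2 * q2 + 3)})"
proof -
  define b where "b = lane d p"
  define zL where "zL = (if 2 * q1 - 1 \<le> 2 * p1 - 2 then (p1 - 1, b) else (q1 - 1, b + 1))"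
  define zR where "zR = (if 2 * p2 + 2 \<le> 2 * q2 + 3 then (p2 + 1, b) else (q2 + 1, b + 1))"
  define tL where "tL = 2 * fst zL + (if snd zL = b then 0 else 1)"
  define tR where "tR = 2 * fst zR + (if snd zR = b then 0 else 1)"
  have zL: "unalign d zL \<notin> X" "snd zL = b \<or> snd zL = b + 1"
    and zR: "unalign d zR \<notin> X" "snd zR = b \<or> snd zR = b + 1"
    using p_run q_run up unfolding zL_def zR_def b_def maximal_run_def by auto
  have "(unalign d zL, unalign d zR) \<in> (edges (- X))\<^sup>*"
    using assms(1) zL zR unfolding no_holes_def induced_connected_def by auto
  from rtrancl_edges_align[OF this, of d] have "(zL, zR) \<in> (edges (unalign d -` (- X)))\<^sup>*"
    by simp
  moreover have "\<forall>k\<le>m. G k \<notin> unalign d -` (- X)" using in_X by simp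
  ultimately have "even (ray_crossings G m zL + ray_crossings G m zR)"
    using even_ray_crossings_connected[OF walk] by blast
  moreover have "\<forall>k\<le>m. G k \<noteq> zL" "\<forall>k\<le>m. G k \<noteq> zR" using in_X zL zR by metis+
  then have "even (ray_crossings G m zL + strip_crossings G m b tL)"
    "even (ray_crossings G m zR + strip_crossings G m b tR)"
    using even_ray_crossings_strip[OF walk] zL zR unfolding tL_def tR_def by blast+
  ultimately have "even (strip_crossings G m b tL + strip_crossings G m b tR)" by presburger
  then have "even (card {k. k < m \<and> joins_rows b (G k) (G (Suc k)) \<and>
      tL < fst (G k) + fst (G (Suc k)) \<and> fst (G k) + fst (G (Suc k)) \<le> tR})"
    by (rule even_strip_crossings_between)
  moreover have "tL = max (2 * p1 - 2) (2 * q1 - 1)" "tR = min (2 * p2 + 2) (2 * q2 + 3)"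
    unfolding tL_def tR_def zL_def zR_def by auto
  ultimately show ?thesis unfolding b_def by simp
qed

lemma window_step_iff:
  assumes p_run: "maximal_run d X p p1 p2" and q_run: "maximal_run d X q q1 q2"
    and up: "lane d q = lane d p + 1" and "x \<in> X" and "y \<in> X" and "tri_adj x y"
  shows "x \<in> portal d X p \<and> y \<in> portal d X q \<longleftrightarrow> lane d x = lane d p \<and> lane d y = lane d q \<and>
    max (2 * p1 - 2) (2 * q1 - 1) < along d x + along d y \<and>
    along d x + along d y \<le> min (2 * p2 + 2) (2 * q2 + 3)"
proof (cases "lane d x = lane d p \<and> lane d y = lane d q")
  case True
  then have "\<not> adj_dir d x y" using up unfolding adj_dir_iff_lane by simp
  from crossing_step_cases[OF assms(6) this]
  have "along d y = along d x \<or> along d y = along d x - 1"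
    using True up by auto
  moreover have "along d x \<noteq> p2 + 1" "along d y \<noteq> q2 + 1"
    using p_run q_run assms(4,5) True unfolding maximal_run_def by (metis unalign_along_lane)+
  ultimately show ?thesis
    using portal_iff_within_run[OF p_run, of x] portal_iff_within_run[OF q_run, of y] True by auto
next
  case False
  then show ?thesis using portal_lane by metis
qed

lemma step_between_portals_iff:
  assumes p_run: "maximal_run d X p p1 p2" and q_run: "maximal_run d X q q1 q2"
    and up: "lane d q = lane d p + 1" and xy: "(x, y) \<in> edges X"
  shows "{portal d X x, portal d X y} = {portal d X p, portal d X q} \<longleftrightarrow>
    joins_rows (lane d p) (align d x) (align d y) \<and>
    max (2 * p1 - 2) (2 * q1 - 1) < along d x + along d y \<and>
    along d x + along d y \<le> min (2 * p2 + 2) (2 * q2 + 3)"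
proof -
  have x: "x \<in> X" "y \<in> X" "tri_adj x y" using xy unfolding edges_def by auto
  have "{portal d X x, portal d X y} = {portal d X p, portal d X q} \<longleftrightarrow>
      (x \<in> portal d X p \<and> y \<in> portal d X q) \<or> (y \<in> portal d X p \<and> x \<in> portal d X q)"
    by (auto simp: doubleton_eq_iff portal_eq_iff_mem)
  also have "\<dots> \<longleftrightarrow> joins_rows (lane d p) (align d x) (align d y) \<and>
      max (2 * p1 - 2) (2 * q1 - 1) < along d x + along d y \<and>
      along d x + along d y \<le> min (2 * p2 + 2) (2 * q2 + 3)"
    using window_step_iff[OF p_run q_run up x]
      window_step_iff[OF p_run q_run up x(2,1) tri_adj_sym[OF x(3)]]
    unfolding joins_rows_def using up by (auto simp: add.commute)
  finally show ?thesis .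
qed

lemma even_steps_between_portals_up:
  assumes "finite X" and "no_holes X" and pq: "(p, q) \<in> edges X" and up: "lane d q = lane d p + 1"
    and closed: "\<gamma> 0 = \<gamma> m" and steps: "\<forall>k<m. (\<gamma> k, \<gamma> (Suc k)) \<in> edges X" and "0 < m"
  shows "even (card {k. k < m \<and>
    {portal d X (\<gamma> k), portal d X (\<gamma> (Suc k))} = {portal d X p, portal d X q}})"
proof -
  have pX: "p \<in> X" and qX: "q \<in> X" using pq unfolding edges_def by auto
  obtain p1 p2 where p_run: "maximal_run d X p p1 p2" using maximal_run_exists[OF assms(1) pX] .
  obtain q1 q2 where q_run: "maximal_run d X q q1 q2" using maximal_run_exists[OF assms(1) qX] .
  define G where "G k = align d (\<gamma> k)" for k
  have walk: "closed_walk G m"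
    unfolding closed_walk_def G_def using closed steps unfolding edges_def by auto
  have "\<gamma> k \<in> X" if "k \<le> m" for k
  proof (cases "k < m")
    case False
    then show ?thesis using that closed steps \<open>0 < m\<close> unfolding edges_def by auto
  qed (use steps in \<open>auto simp: edges_def\<close>)
  then have G_X: "\<forall>k\<le>m. unalign d (G k) \<in> X" unfolding G_def by simp
  have "{k. k < m \<and> {portal d X (\<gamma> k), portal d X (\<gamma> (Suc k))} = {portal d X p, portal d X q}} =
      {k. k < m \<and> joins_rows (lane d p) (G k) (G (Suc k)) \<and>
        max (2 * p1 - 2) (2 * q1 - 1) < fst (G k) + fst (G (Suc k)) \<and>
        fst (G k) + fst (G (Suc k)) \<le> min (2 * p2 + 2) (2 * q2 + 3)}"
  proof (rule Collect_cong)
    fix k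
    show "k < m \<and> {portal d X (\<gamma> k), portal d X (\<gamma> (Suc k))} = {portal d X p, portal d X q} \<longleftrightarrow>
      k < m \<and> joins_rows (lane d p) (G k) (G (Suc k)) \<and>
        max (2 * p1 - 2) (2 * q1 - 1) < fst (G k) + fst (G (Suc k)) \<and>
        fst (G k) + fst (G (Suc k)) \<le> min (2 * p2 + 2) (2 * q2 + 3)"
      using step_between_portals_iff[OF p_run q_run up, of "\<gamma> k" "\<gamma> (Suc k)"] steps
      unfolding G_def by (cases "k < m") simp_all
  qed
  then show ?thesis using even_window_crossings[OF assms(2) p_run q_run up walk G_X] by simp
qed

lemma even_steps_between_adjacent_portals:
  assumes "finite X" and "no_holes X" and pq: "(p, q) \<in> edges X"
    and ne: "portal d X p \<noteq> portal d X q"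
    and "\<gamma> 0 = \<gamma> m" and "\<forall>k<m. (\<gamma> k, \<gamma> (Suc k)) \<in> edges X"
  shows "even (card {k. k < m \<and>
    {portal d X (\<gamma> k), portal d X (\<gamma> (Suc k))} = {portal d X p, portal d X q}})"
proof (cases "m = 0")
  case False
  have "\<not> adj_dir d p q" using portal_eq_iff_adj_dir[OF pq] ne by simp
  then consider "lane d q = lane d p + 1" | "lane d p = lane d q + 1"
    using crossing_step_cases[of p q d] pq unfolding edges_def by force
  then show ?thesis
  proof cases
    case 1
    then show ?thesis using even_steps_between_portals_up assms False by blast
  next
    case 2
    have "(q, p) \<in> edges X" using pq sym_edges by (metis symD)
    from even_steps_between_portals_up[OF assms(1,2) this 2 assms(5,6)] False show ?thesis
      by (simp add: insert_commute)
  qed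
qed simp

definition edges_not_between :: "axis \<Rightarrow> vtx set \<Rightarrow> vtx set \<Rightarrow> vtx set \<Rightarrow> (vtx \<times> vtx) set" where
  "edges_not_between d X P Q =
     {(x, y). (x, y) \<in> edges X \<and> (portal d X x, portal d X y) \<notin> {(P, Q), (Q, P)}}"

lemma edges_dir_subset_edges_not_between:
  assumes "P \<noteq> Q"
  shows "edges_dir d X \<subseteq> edges_not_between d X P Q"
proof
  fix e assume e: "e \<in> edges_dir d X"
  obtain x y where xy: "e = (x, y)" by (cases e)
  have "y \<in> portal d X x" unfolding portal_def using e xy by auto
  then have "portal d X y = portal d X x" by (rule portal_eq_if_mem)
  then show "e \<in> edges_not_between d X P Q"
    unfolding edges_not_between_def using e xy edges_dir_subset_edges assms by auto
qed

lemma portal_reachable_not_between: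
  assumes "P \<noteq> Q" and "b \<in> portal d X a"
  shows "(a, b) \<in> (edges_not_between d X P Q)\<^sup>*"
  using assms rtrancl_mono[OF edges_dir_subset_edges_not_between] unfolding portal_def by blast

lemma lift_portal_path:
  assumes "(portal d X a, B) \<in> (remove_edge (portal_edges d X) P Q)\<^sup>*" and "P \<noteq> Q" and "b \<in> B"
  shows "(a, b) \<in> (edges_not_between d X P Q)\<^sup>*"
  using assms(1,3)
proof (induction arbitrary: b rule: rtrancl_induct)
  case base
  then show ?case using portal_reachable_not_between[OF assms(2)] by blast
next
  case (step B C)
  from step.hyps(2) have BC: "B \<in> portals d X" "C \<in> portals d X" "(B, C) \<notin> {(P, Q), (Q, P)}"
    and "\<exists>x\<in>B. \<exists>y\<in>C. (x, y) \<in> edges X" unfolding portal_edges_def remove_edge_def by auto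
  then obtain x y where xy: "x \<in> B" "y \<in> C" "(x, y) \<in> edges X" by blast
  have "portal d X x = B" "portal d X y = C" using portal_eq_of_mem_portals BC xy by blast+
  then have "(x, y) \<in> edges_not_between d X P Q" unfolding edges_not_between_def using xy BC by auto
  moreover have "b \<in> portal d X y" using step.prems \<open>portal d X y = C\<close> by simp
  ultimately show ?case
    using step.IH[OF xy(1)] portal_reachable_not_between[OF assms(2)]
    by (meson converse_rtrancl_into_rtrancl rtrancl_trans)
qed

lemma portal_edge_is_bridge:
  assumes "finite X" and "no_holes X" and pq: "(p, q) \<in> edges X"
    and ne: "portal d X p \<noteq> portal d X q"
  shows "(portal d X p, portal d X q) \<notin>
    (remove_edge (portal_edges d X) (portal d X p) (portal d X q))\<^sup>*"
proof
  assume "(portal d X p, portal d X q) \<in>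
    (remove_edge (portal_edges d X) (portal d X p) (portal d X q))\<^sup>*"
  then have "(p, q) \<in> (edges_not_between d X (portal d X p) (portal d X q))\<^sup>*"
    using lift_portal_path ne portal_self by blast
  then obtain n \<gamma> where g0: "\<gamma> 0 = p" and gn: "\<gamma> n = q"
    and gs: "\<forall>i<n. (\<gamma> i, \<gamma> (Suc i)) \<in> edges_not_between d X (portal d X p) (portal d X q)"
    unfolding rtrancl_power relpow_fun_conv by blast
  define \<delta> where "\<delta> k = (if k \<le> n then \<gamma> k else p)" for k
  define crosses where
    "crosses k \<longleftrightarrow> {portal d X (\<delta> k), portal d X (\<delta> (Suc k))} = {portal d X p, portal d X q}" for k
  have "\<not> crosses k" if "k < n" for k
    using gs that unfolding crosses_def \<delta>_def edges_not_between_def by (auto simp: doubleton_eq_iff)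
  moreover have "crosses n" using gn unfolding crosses_def \<delta>_def by auto
  ultimately have "{k. k < Suc n \<and> crosses k} = {n}" by (auto simp: less_Suc_eq)
  moreover have "even (card {k. k < Suc n \<and> crosses k})" unfolding crosses_def
  proof (rule even_steps_between_adjacent_portals[OF assms])
    show "\<forall>k<Suc n. (\<delta> k, \<delta> (Suc k)) \<in> edges X"
      using gs gn symD[OF sym_edges pq] unfolding \<delta>_def edges_not_between_def
      by (auto simp: less_Suc_eq)
  qed (use g0 in \<open>simp add: \<delta>_def\<close>)
  ultimately show False by simp
qed

section \<open>Shortest walks\<close>

locale shortest_walk =
  fixes X :: "vtx set" and f :: "nat \<Rightarrow> vtx" and n :: nat
  assumes finite_X: "finite X" and no_holes_X: "no_holes X" and start: "f 0 \<in> X"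
    and step: "\<And>k. k < n \<Longrightarrow> (f k, f (Suc k)) \<in> edges X"
    and shortest: "\<And>m. (f 0, f n) \<in> edges X ^^ m \<Longrightarrow> n \<le> m"
begin

lemma walk_in_X: "k \<le> n \<Longrightarrow> f k \<in> X"
  using start step[of "k - 1"] unfolding edges_def by (cases k) auto

lemma subwalk_shortest:
  assumes "i \<le> j" and "j \<le> n" and "(f i, f j) \<in> edges X ^^ m"
  shows "j - i \<le> m"
proof -
  have "(f 0, f i) \<in> edges X ^^ i"
    using relpow_subwalk[of n f "edges X" 0 i] step assms by simp
  moreover have "(f j, f n) \<in> edges X ^^ (n - j)"
    using relpow_subwalk[of n f "edges X" j n] step assms by simp
  ultimately have "(f 0, f n) \<in> edges X ^^ (i + m + (n - j))" using assms(3) by (meson relpow_trans)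
  then show ?thesis using shortest assms by fastforce
qed

lemma along_subwalk_le:
  assumes "i \<le> j" and "j \<le> n"
  shows "\<bar>along d (f j) - along d (f i)\<bar> \<le> int (j - i)"
  using assms
proof (induction j)
  case (Suc j)
  show ?case
  proof (cases "i = Suc j")
    case False
    have "tri_adj (f j) (f (Suc j))" using step Suc.prems unfolding edges_def by auto
    then have "\<bar>along d (f (Suc j)) - along d (f j)\<bar> \<le> 1" by (rule tri_adj_along_le)
    then show ?thesis using Suc False by simp
  qed simp
qed simp

definition portal_at :: "axis \<Rightarrow> nat \<Rightarrow> vtx set" where
  "portal_at d k = portal d X (f k)"

definition changes :: "axis \<Rightarrow> nat set" where
  "changes d = {k. k < n \<and> portal_at d k \<noteq> portal_at d (Suc k)}"

definition crossed :: "axis \<Rightarrow> nat \<Rightarrow> vtx set set" where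
  "crossed d k = {portal_at d k, portal_at d (Suc k)}"

lemma portal_edges_portal_at:
  assumes "k \<in> changes d"
  shows "(portal_at d k, portal_at d (Suc k)) \<in> portal_edges d X"
proof -
  have k: "k < n" "portal_at d k \<noteq> portal_at d (Suc k)" using assms unfolding changes_def by auto
  have "f k \<in> X" "f (Suc k) \<in> X" using walk_in_X k(1) by auto
  then show ?thesis
    using k step[OF k(1)] portal_self unfolding portal_edges_def portals_def portal_at_def by blast
qed

lemma change_is_bridge:
  assumes "k \<in> changes d"
  shows "(portal_at d (Suc k), portal_at d k) \<notin>
    (remove_edge (portal_edges d X) (portal_at d k) (portal_at d (Suc k)))\<^sup>*"
proof
  have k: "k < n" "portal_at d k \<noteq> portal_at d (Suc k)" using assms unfolding changes_def by auto
  assume "(portal_at d (Suc k), portal_at d k) \<in>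
    (remove_edge (portal_edges d X) (portal_at d k) (portal_at d (Suc k)))\<^sup>*"
  then have "(portal_at d k, portal_at d (Suc k)) \<in>
    (remove_edge (portal_edges d X) (portal_at d k) (portal_at d (Suc k)))\<^sup>*"
    using symD[OF sym_rtrancl[OF sym_remove_edge[OF sym_portal_edges]]] by blast
  then show False
    using portal_edge_is_bridge[OF finite_X no_holes_X step[OF k(1)]] k(2)
    unfolding portal_at_def by blast
qed

text \<open>A shortest walk never crosses back over the portal edge it has just crossed: the point
  where it returns lies in the portal it left, at along-distance at most the length of the
  detour, so walking inside that portal would be shorter.\<close>
lemma no_crossing_back:
  assumes "k < k'" and "k' < n" and "portal_at d k' = portal_at d (Suc k)"
    and "portal_at d (Suc k') = portal_at d k" and "portal_at d k \<noteq> portal_at d (Suc k)"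
  shows False
proof -
  have "f k \<in> X" using walk_in_X assms by auto
  have return: "f (Suc k') \<in> portal d X (f k)"
    using assms(4) portal_self unfolding portal_at_def by metis
  have L1: "lane d (f k') = lane d (f (Suc k))"
    using assms(3) portal_self portal_lane unfolding portal_at_def by metis
  have L2: "lane d (f (Suc k')) = lane d (f k)" using portal_lane[OF return] .
  have "\<not> adj_dir d (f k) (f (Suc k))" "\<not> adj_dir d (f k') (f (Suc k'))"
    using portal_eq_iff_adj_dir[OF step, of k d] portal_eq_iff_adj_dir[OF step, of k' d] assms
    unfolding portal_at_def by auto
  moreover have "tri_adj (f k) (f (Suc k))" "tri_adj (f k') (f (Suc k'))"
    using step assms(1,2) unfolding edges_def by auto
  ultimately have
    "\<bar>(along d (f (Suc k')) - along d (f k')) + (along d (f (Suc k)) - along d (f k))\<bar> \<le> 1"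
    using cross_and_return_along L1 L2 by blast
  moreover have "\<bar>along d (f k') - along d (f (Suc k))\<bar> \<le> int (k' - Suc k)"
    using along_subwalk_le[of "Suc k" k' d] assms(1,2) by simp
  ultimately have "\<bar>along d (f (Suc k')) - along d (f k)\<bar> \<le> int (k' - k)"
    using assms(1) by linarith
  moreover have "Suc k' - k \<le> nat \<bar>along d (f (Suc k')) - along d (f k)\<bar>"
    using subwalk_shortest[OF _ _ portal_relpow_edges[OF \<open>f k \<in> X\<close> return]] assms by simp
  ultimately show False using assms(1) by linarith
qed

lemma portal_at_path_avoiding:
  assumes "i \<le> j" and "j \<le> n"
    and "\<And>l. i \<le> l \<Longrightarrow> l < j \<Longrightarrow> l \<in> changes d \<Longrightarrow> crossed d l \<noteq> crossed d k"
  shows "(portal_at d i, portal_at d j) \<in>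
    (remove_edge (portal_edges d X) (portal_at d k) (portal_at d (Suc k)))\<^sup>*"
proof (rule rtrancl_chain[OF _ assms(1)])
  fix l assume l: "i \<le> l" "l < j"
  show "portal_at d l = portal_at d (Suc l) \<or>
    (portal_at d l, portal_at d (Suc l)) \<in>
      remove_edge (portal_edges d X) (portal_at d k) (portal_at d (Suc k))"
  proof (cases "l \<in> changes d")
    case True
    then have "(portal_at d l, portal_at d (Suc l)) \<in> portal_edges d X"
      by (rule portal_edges_portal_at)
    moreover have "crossed d l \<noteq> crossed d k" using assms(3) l True .
    ultimately show ?thesis unfolding remove_edge_def crossed_def by auto
  next
    case False
    then show ?thesis using l assms(2) unfolding changes_def by auto
  qed
qed

lemma crossed_distinct:
  assumes k: "k \<in> changes d" and "k' \<in> changes d" and "k < k'"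
  shows "crossed d k \<noteq> crossed d k'"
proof
  assume "crossed d k = crossed d k'"
  define k0 where "k0 = (LEAST j. j \<in> changes d \<and> k < j \<and> crossed d j = crossed d k)"
  have k0: "k0 \<in> changes d" "k < k0" "crossed d k0 = crossed d k"
    using LeastI[of "\<lambda>j. j \<in> changes d \<and> k < j \<and> crossed d j = crossed d k" k'] assms
      \<open>crossed d k = crossed d k'\<close> unfolding k0_def by auto
  have "(portal_at d (Suc k), portal_at d k0) \<in>
      (remove_edge (portal_edges d X) (portal_at d k) (portal_at d (Suc k)))\<^sup>*"
  proof (rule portal_at_path_avoiding)
    fix l assume "Suc k \<le> l" "l < k0" "l \<in> changes d"
    then show "crossed d l \<noteq> crossed d k"
      using not_less_Least[of l "\<lambda>j. j \<in> changes d \<and> k < j \<and> crossed d j = crossed d k"]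
      unfolding k0_def by auto
  qed (use k0 in \<open>auto simp: changes_def\<close>)
  moreover have "k0 < n" "portal_at d k \<noteq> portal_at d (Suc k)"
    using k0(1) k unfolding changes_def by auto
  moreover from k0(3)
  have "(portal_at d k0 = portal_at d k \<and> portal_at d (Suc k0) = portal_at d (Suc k)) \<or>
      (portal_at d k0 = portal_at d (Suc k) \<and> portal_at d (Suc k0) = portal_at d k)"
    unfolding crossed_def by (auto simp: doubleton_eq_iff)
  ultimately show False using change_is_bridge[OF k] no_crossing_back[OF k0(2)] by auto
qed

lemma inj_on_crossed: "inj_on (crossed d) (changes d)"
  by (rule inj_onI) (metis crossed_distinct linorder_neqE_nat)

lemma portal_walk_uses_crossed:
  assumes "h 0 = portal_at d 0" and "h m = portal_at d n"
    and "\<forall>j<m. (h j, h (Suc j)) \<in> portal_edges d X" and k: "k \<in> changes d"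
  shows "\<exists>j<m. {h j, h (Suc j)} = crossed d k"
proof (rule ccontr)
  let ?R = "remove_edge (portal_edges d X) (portal_at d k) (portal_at d (Suc k))"
  assume "\<not> (\<exists>j<m. {h j, h (Suc j)} = crossed d k)"
  then have "(h 0, h m) \<in> ?R\<^sup>*"
    using assms(3) by (intro rtrancl_chain) (auto simp: remove_edge_def crossed_def)
  then have "(portal_at d n, portal_at d 0) \<in> ?R\<^sup>*"
    using assms(1,2) symD[OF sym_rtrancl[OF sym_remove_edge[OF sym_portal_edges]]] by metis
  moreover have "(portal_at d 0, portal_at d k) \<in> ?R\<^sup>*"
  proof (rule portal_at_path_avoiding)
    fix l assume "0 \<le> l" "l < k" "l \<in> changes d"
    then show "crossed d l \<noteq> crossed d k" using crossed_distinct[OF _ k] by blast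
  qed (use k in \<open>auto simp: changes_def\<close>)
  moreover have "(portal_at d (Suc k), portal_at d n) \<in> ?R\<^sup>*"
  proof (rule portal_at_path_avoiding)
    fix l assume "Suc k \<le> l" "l < n" "l \<in> changes d"
    then show "crossed d l \<noteq> crossed d k" using crossed_distinct[OF k] by fastforce
  qed (use k in \<open>auto simp: changes_def\<close>)
  ultimately have "(portal_at d (Suc k), portal_at d k) \<in> ?R\<^sup>*" by (meson rtrancl_trans)
  then show False using change_is_bridge[OF k] by simp
qed

lemma relpow_portal_at:
  "m \<le> n \<Longrightarrow> (portal_at d 0, portal_at d m) \<in>
     portal_edges d X ^^ card {k. k < m \<and> portal_at d k \<noteq> portal_at d (Suc k)}"
proof (induction m)
  case (Suc m)
  show ?case
  proof (cases "portal_at d m = portal_at d (Suc m)")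
    case False
    then have "(portal_at d m, portal_at d (Suc m)) \<in> portal_edges d X"
      using portal_edges_portal_at Suc.prems unfolding changes_def by simp
    with Suc show ?thesis using False by (auto simp: card_less_Suc_filter intro: relpow_Suc_I)
  qed (use Suc in \<open>simp add: card_less_Suc_filter\<close>)
qed simp

lemma dist_dir_eq_card_changes: "dist_dir d X (f 0) (f n) = card (changes d)"
proof -
  have "(portal_at d 0, portal_at d n) \<in> portal_edges d X ^^ card (changes d)"
    using relpow_portal_at[of n d] unfolding changes_def by simp
  then have le: "dist_dir d X (f 0) (f n) \<le> card (changes d)"
    unfolding dist_dir_def portal_at_def by (rule gdist_le)
  from relpow_gdist[OF relpow_imp_rtrancl[OF \<open>(portal_at d 0, portal_at d n) \<in> _\<close>]]
  have "(portal_at d 0, portal_at d n) \<in> portal_edges d X ^^ dist_dir d X (f 0) (f n)"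
    unfolding dist_dir_def portal_at_def .
  then obtain h where h: "h 0 = portal_at d 0" "h (dist_dir d X (f 0) (f n)) = portal_at d n"
    "\<forall>j<dist_dir d X (f 0) (f n). (h j, h (Suc j)) \<in> portal_edges d X"
    unfolding relpow_fun_conv by blast
  have "crossed d ` changes d \<subseteq> (\<lambda>j. {h j, h (Suc j)}) ` {..<dist_dir d X (f 0) (f n)}"
  proof
    fix s assume "s \<in> crossed d ` changes d"
    then obtain k where "k \<in> changes d" "s = crossed d k" by blast
    then show "s \<in> (\<lambda>j. {h j, h (Suc j)}) ` {..<dist_dir d X (f 0) (f n)}"
      using portal_walk_uses_crossed[OF h] by fastforce
  qed
  then have "card (crossed d ` changes d) \<le>
      card ((\<lambda>j. {h j, h (Suc j)}) ` {..<dist_dir d X (f 0) (f n)})"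
    by (intro card_mono) auto
  also have "\<dots> \<le> dist_dir d X (f 0) (f n)"
    using card_image_le[of "{..<dist_dir d X (f 0) (f n)}" "\<lambda>j. {h j, h (Suc j)}"] by simp
  finally have "card (crossed d ` changes d) \<le> dist_dir d X (f 0) (f n)" .
  then show ?thesis using le card_image[OF inj_on_crossed] by simp
qed

lemma sum_card_changes:
  "m \<le> n \<Longrightarrow>
     card {k. k < m \<and> portal_at AxX k \<noteq> portal_at AxX (Suc k)} +
     card {k. k < m \<and> portal_at AxY k \<noteq> portal_at AxY (Suc k)} +
     card {k. k < m \<and> portal_at AxZ k \<noteq> portal_at AxZ (Suc k)} = 2 * m"
proof (induction m)
  case (Suc m)
  then show ?case
    using two_portals_change[OF step[of m]] unfolding portal_at_def
    by (simp add: card_less_Suc_filter)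
qed simp

lemma two_length_eq_sum_dist_dir:
  "2 * n = dist_dir AxX X (f 0) (f n) + dist_dir AxY X (f 0) (f n) + dist_dir AxZ X (f 0) (f n)"
  using sum_card_changes[of n] unfolding dist_dir_eq_card_changes changes_def by simp

end

theorem mainTheorem3:
  fixes X :: "vtx set"
  assumes "finite X" and "induced_connected X" and "no_holes X"
      and "u \<in> X" and "v \<in> X"
  shows "2 * dist X u v = dist_dir AxX X u v + dist_dir AxY X u v + dist_dir AxZ X u v"
proof -
  have "(u, v) \<in> (edges X)\<^sup>*" using assms(2,4,5) unfolding induced_connected_def by blast
  then have "(u, v) \<in> edges X ^^ dist X u v" unfolding dist_def by (rule relpow_gdist)
  then obtain f where f: "f 0 = u" "f (dist X u v) = v" "\<forall>i<dist X u v. (f i, f (Suc i)) \<in> edges X"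
    unfolding relpow_fun_conv by blast
  then interpret shortest_walk X f "dist X u v"
    using assms(1,3,4) gdist_le unfolding dist_def by unfold_locales auto
  show ?thesis using two_length_eq_sum_dist_dir f by simp
qed

end
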